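(* Let $p,n\in\mathbb N$ with $p\ge n\ge 10$, and let $G\in \mathrm{Ex}(p;T_n^3)$. If $G$ is connected, then $\Delta(G)\in\{n-5,n-4\}$.
   Context: All graphs are finite simple graphs; $\Delta(G)$ is the maximum degree of $G$. For a graph $L$, $\mathrm{ex}(p;L)$ is the maximum number of edges in a graph on $p$ vertices containing no subgraph isomorphic to $L$, and $\mathrm{Ex}(p;L)$ is the set of graphs on $p$ vertices containing no copy of $L$ and having exactly $\mathrm{ex}(p;L)$ edges. For $n\ge 6$, $T_n^3$ is the tree on vertex set $\{v_0,\ldots,v_{n-1}\}$ with edge set $\{v_0v_1,\ldots,v_0v_{n-4},\ v_1v_{n-3},\ v_1v_{n-2},\ v_1v_{n-1}\}$. *)

theory Defs
  imports Main
begin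

definition is_graph :: "'a set \<Rightarrow> 'a set set \<Rightarrow> bool" where
  "is_graph V E \<longleftrightarrow> finite V \<and> (\<forall>e\<in>E. e \<subseteq> V \<and> card e = 2)"

definition contains_copy :: "'a set \<Rightarrow> 'a set set \<Rightarrow> 'b set \<Rightarrow> 'b set set \<Rightarrow> bool" where
  "contains_copy V E LV LE \<longleftrightarrow>
     (\<exists>f. inj_on f LV \<and> f ` LV \<subseteq> V \<and> (\<forall>e\<in>LE. f ` e \<in> E))"

text \<open>ex(p;L): maximum number of edges of an L-free graph on p vertices
  (vertices taken from nat, which is no loss of generality).\<close>
definition ex_num :: "nat \<Rightarrow> 'b set \<Rightarrow> 'b set set \<Rightarrow> nat" where
  "ex_num p LV LE = Max {card E | (V :: nat set) E.
      is_graph V E \<and> card V = p \<and> \<not> contains_copy V E LV LE}"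

definition in_Ex :: "nat \<Rightarrow> 'b set \<Rightarrow> 'b set set \<Rightarrow> 'a set \<Rightarrow> 'a set set \<Rightarrow> bool" where
  "in_Ex p LV LE V E \<longleftrightarrow> is_graph V E \<and> card V = p \<and> \<not> contains_copy V E LV LE
      \<and> card E = ex_num p LV LE"

definition degree :: "'a set set \<Rightarrow> 'a \<Rightarrow> nat" where
  "degree E v = card {e\<in>E. v \<in> e}"

definition max_degree :: "'a set \<Rightarrow> 'a set set \<Rightarrow> nat" where
  "max_degree V E = Max (degree E ` V)"

definition adj :: "'a set set \<Rightarrow> 'a \<Rightarrow> 'a \<Rightarrow> bool" where
  "adj E u v \<longleftrightarrow> {u, v} \<in> E"

definition connected_graph :: "'a set \<Rightarrow> 'a set set \<Rightarrow> bool" where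
  "connected_graph V E \<longleftrightarrow> V \<noteq> {} \<and> (\<forall>u\<in>V. \<forall>v\<in>V. (adj E)\<^sup>*\<^sup>* u v)"

text \<open>The tree T_n^3 on vertices v_0..v_{n-1} (v_i represented by i).\<close>
definition T3_V :: "nat \<Rightarrow> nat set" where
  "T3_V n = {0..<n}"

definition T3_E :: "nat \<Rightarrow> nat set set" where
  "T3_E n = {{0, i} | i. 1 \<le> i \<and> i \<le> n - 4} \<union> {{1, i} | i. n - 3 \<le> i \<and> i \<le> n - 1}"

end

(* Let \<Delta> be the maximum degree of an extremal T_n^3-free graph G.
   If \<Delta> \<le> n - 6, adding any missing edge keeps all degrees below n - 4, so creates no
   copy of T_n^3 (whose vertex v_0 has degree n - 4), contradicting extremality.
   For the upper bound, replacing the edges touching a set W of fewer than n vertices by a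
   clique on W keeps G free of T_n^3, so at least |W|(|W| - 1)/2 edges of G touch W.
   Now let u have degree \<Delta> \<ge> n - 3. A neighbour w of u with enough neighbours outside
   N[u] has degree at most 3, since otherwise uw is the edge v_0v_1 of a copy of T_n^3.
   For W a set of n - 1 vertices of N[u] (completed by one suitably chosen vertex when
   \<Delta> = n - 3) this bounds the number of edges touching W below |W|(|W| - 1)/2; when
   \<Delta> = n - 2, connectivity supplies a neighbour of u with a neighbour outside N[u]. *)

theory Submission
  imports Defs
begin

definition neighbours :: "'a set set \<Rightarrow> 'a \<Rightarrow> 'a set" where
  "neighbours E x = {y. {x, y} \<in> E}"

lemma in_neighbours_sym: "y \<in> neighbours E x \<longleftrightarrow> x \<in> neighbours E y"
  unfolding neighbours_def by (simp add: insert_commute)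

lemma neighbours_subset:
  assumes "is_graph V E" shows "neighbours E x \<subseteq> V"
  using assms unfolding is_graph_def neighbours_def by auto

lemma finite_neighbours:
  assumes "is_graph V E" shows "finite (neighbours E x)"
  using assms finite_subset[OF neighbours_subset[OF assms]] unfolding is_graph_def by simp

lemma not_in_neighbours:
  assumes "is_graph V E" shows "x \<notin> neighbours E x"
  using assms unfolding is_graph_def neighbours_def by force

lemma finite_edges:
  assumes "is_graph V E" shows "finite E"
proof -
  have "E \<subseteq> Pow V" "finite V" using assms unfolding is_graph_def by auto
  then show ?thesis using finite_subset by blast
qed

lemma edgeE:
  assumes "is_graph V E" "e \<in> E"
  obtains a b where "e = {a, b}" "a \<noteq> b"
  using assms unfolding is_graph_def by (metis card_2_iff)

lemma degree_eq_card_neighbours: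
  assumes G: "is_graph V E"
  shows "degree E v = card (neighbours E v)"
proof -
  have "bij_betw (\<lambda>y. {v, y}) (neighbours E v) {e\<in>E. v \<in> e}"
  proof (rule bij_betwI')
    fix x y show "({v, x} = {v, y}) = (x = y)" by (metis doubleton_eq_iff)
  next
    fix e assume "e \<in> {e\<in>E. v \<in> e}"
    then obtain a b where "e = {a, b}" "e \<in> E" "v \<in> e" using edgeE[OF G] by blast
    then show "\<exists>y\<in>neighbours E v. e = {v, y}"
      unfolding neighbours_def by (auto simp: insert_commute)
  qed (simp add: neighbours_def)
  then show ?thesis unfolding degree_def by (simp add: bij_betw_same_card)
qed

lemma card_neighbours_le_max_degree:
  assumes G: "is_graph V E"
  shows "card (neighbours E z) \<le> max_degree V E"
proof (cases "z \<in> V")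
  case True
  have "finite V" using G unfolding is_graph_def by simp
  with True show ?thesis
    unfolding max_degree_def degree_eq_card_neighbours[OF G, symmetric] by simp
next
  case False
  then have "neighbours E z = {}"
    using G unfolding neighbours_def is_graph_def by auto
  then show ?thesis by simp
qed

lemma max_degree_attained:
  assumes G: "is_graph V E" and "V \<noteq> {}"
  obtains u where "u \<in> V" "card (neighbours E u) = max_degree V E"
proof -
  have "finite V" using G unfolding is_graph_def by simp
  then have "max_degree V E \<in> degree E ` V"
    unfolding max_degree_def using assms(2) by simp
  then show ?thesis using that degree_eq_card_neighbours[OF G] by auto
qed

lemma card_neighbours_insert_edge_le:
  assumes "finite (neighbours E z)"
  shows "card (neighbours (insert {a, b} E) z) \<le> card (neighbours E z) + 1"
proof -
  have "neighbours (insert {a, b} E) z \<subseteq> insert (if z = a then b else a) (neighbours E z)"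
    unfolding neighbours_def by (auto dest: doubleton_eq_iff[THEN iffD1])
  then have "card (neighbours (insert {a, b} E) z)
      \<le> card (insert (if z = a then b else a) (neighbours E z))"
    using assms by (simp add: card_mono)
  also have "\<dots> \<le> card (neighbours E z) + 1" using assms by (simp add: card_insert_if)
  finally show ?thesis .
qed

lemma rtranclp_adj_leaves_set:
  assumes "(adj E)\<^sup>*\<^sup>* a b" "a \<in> S" "b \<notin> S"
  shows "\<exists>c d. c \<in> S \<and> d \<notin> S \<and> {c, d} \<in> E"
  using assms
proof (induction rule: rtranclp_induct)
  case (step y z)
  then show ?case unfolding adj_def by blast
qed simp

lemma is_graph_image:
  assumes G: "is_graph V E" and h: "inj_on h V"
  shows "is_graph (h ` V) ((`) h ` E)"
  unfolding is_graph_def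
proof (intro conjI ballI)
  show "finite (h ` V)" using G unfolding is_graph_def by simp
next
  fix e' assume "e' \<in> (`) h ` E"
  then obtain e where e: "e \<in> E" "e' = h ` e" by auto
  then have "e \<subseteq> V" "card e = 2" using G unfolding is_graph_def by auto
  then show "e' \<subseteq> h ` V" "card e' = 2"
    using e inj_on_subset[OF h] by (auto simp: card_image)
qed

lemma contains_copy_from_image:
  assumes G: "is_graph V E" and h: "inj_on h V"
    and "contains_copy (h ` V) ((`) h ` E) LV LE"
  shows "contains_copy V E LV LE"
proof -
  obtain f where f: "inj_on f LV" "f ` LV \<subseteq> h ` V" "\<forall>e\<in>LE. f ` e \<in> (`) h ` E"
    using assms(3) unfolding contains_copy_def by blast
  define g where "g = inv_into V h \<circ> f"
  have "inj_on g LV"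
    unfolding g_def using f(1,2) inj_on_subset[OF inj_on_inv_into] by (blast intro: comp_inj_on)
  moreover have "g ` LV \<subseteq> V"
    unfolding g_def using f(2) by (auto intro!: inv_into_into)
  moreover have "g ` e \<in> E" if "e \<in> LE" for e
  proof -
    obtain e0 where e0: "e0 \<in> E" "f ` e = h ` e0" using f(3) \<open>e \<in> LE\<close> by auto
    have "e0 \<subseteq> V" using G e0(1) unfolding is_graph_def by auto
    then have "g ` e = e0" unfolding g_def image_comp[symmetric] e0(2) using h by simp
    then show ?thesis using e0(1) by simp
  qed
  ultimately show ?thesis unfolding contains_copy_def by blast
qed

lemma card_edges_le_pow:
  assumes "is_graph V E"
  shows "card E \<le> 2 ^ card V"
proof -
  have "E \<subseteq> Pow V" "finite V" using assms unfolding is_graph_def by auto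
  then have "card E \<le> card (Pow V)" by (simp add: card_mono)
  then show ?thesis using \<open>finite V\<close> by (simp add: card_Pow)
qed

lemma card_edges_le_ex_num:
  fixes V :: "'a set" and E :: "'a set set"
  assumes G: "is_graph V E" and "card V = p" and "\<not> contains_copy V E LV LE"
  shows "card E \<le> ex_num p LV LE"
proof -
  have "finite V" using G unfolding is_graph_def by simp
  then obtain h where h: "bij_betw h V {0..<p}"
    using finite_same_card_bij[of V "{0..<p}"] \<open>card V = p\<close> by auto
  then have inj: "inj_on h V" and hV: "h ` V = {0..<p}" by (auto simp: bij_betw_def)
  have inj_edges: "inj_on ((`) h) E"
  proof (rule inj_onI)
    fix e e' assume "e \<in> E" "e' \<in> E" "h ` e = h ` e'"
    then show "e = e'" using G inj unfolding is_graph_def by (metis inj_on_image_eq_iff)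
  qed
  let ?Ns = "{card E | (V :: nat set) E. is_graph V E \<and> card V = p \<and> \<not> contains_copy V E LV LE}"
  have "card ((`) h ` E) \<in> ?Ns"
    using is_graph_image[OF G inj] contains_copy_from_image[OF G inj] assms(3) hV by fastforce
  moreover have "finite ?Ns"
    by (rule finite_subset[of _ "{..2 ^ p}"]) (auto dest: card_edges_le_pow)
  ultimately show ?thesis
    unfolding ex_num_def using Max_ge card_image[OF inj_edges] by fastforce
qed

lemma T3_E_zeroI: "1 \<le> i \<Longrightarrow> i \<le> n - 4 \<Longrightarrow> {0, i} \<in> T3_E n"
  unfolding T3_E_def by blast

lemma T3_E_oneI: "n - 3 \<le> i \<Longrightarrow> i \<le> n - 1 \<Longrightarrow> {1, i} \<in> T3_E n"
  unfolding T3_E_def by blast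

lemma T3_E_subset: "2 \<le> n \<Longrightarrow> e \<in> T3_E n \<Longrightarrow> e \<subseteq> {0..<n}"
  unfolding T3_E_def by auto

lemma contains_T3_imp_card_neighbours_ge:
  assumes "is_graph V E" and "contains_copy V E (T3_V n) (T3_E n)"
  shows "\<exists>z. n - 4 \<le> card (neighbours E z)"
proof -
  obtain f where f: "inj_on f {0..<n}" "\<forall>e\<in>T3_E n. f ` e \<in> E"
    using assms(2) unfolding contains_copy_def T3_V_def by blast
  have "f ` {1..n-4} \<subseteq> neighbours E (f 0)"
    using f(2) T3_E_zeroI unfolding neighbours_def by fastforce
  moreover have "inj_on f {1..n-4}" by (rule inj_on_subset[OF f(1)]) auto
  then have "card (f ` {1..n-4}) = n - 4" by (simp add: card_image)
  ultimately show ?thesis using finite_neighbours[OF assms(1)] card_mono by metis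
qed

lemma T3_connected:
  assumes "5 \<le> n" and "\<And>a b. {a, b} \<in> T3_E n \<Longrightarrow> Q a \<longleftrightarrow> Q b" and "i < n"
  shows "Q i \<longleftrightarrow> Q 0"
proof -
  have "{0, 1} \<in> T3_E n" using assms(1) by (intro T3_E_zeroI) auto
  then have "Q 1 \<longleftrightarrow> Q 0" using assms(2) by blast
  moreover have "i = 0 \<or> (1 \<le> i \<and> i \<le> n - 4) \<or> (n - 3 \<le> i \<and> i \<le> n - 1)"
    using assms(3) by linarith
  ultimately show ?thesis using assms(2) T3_E_zeroI T3_E_oneI by blast
qed

lemma contains_T3_of_edge:
  assumes G: "is_graph V E" and n: "5 \<le> n" and xy: "{x, y} \<in> E"
    and A: "A \<subseteq> neighbours E x - {y}" "card A = n - 5"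
    and B: "B \<subseteq> neighbours E y - {x}" "card B = 3" and AB: "A \<inter> B = {}"
  shows "contains_copy V E (T3_V n) (T3_E n)"
proof -
  have "finite A" "finite B" using A B finite_neighbours[OF G] finite_subset by blast+
  then obtain g h where g: "bij_betw g {2..n-4} A" and h: "bij_betw h {n-3..<n} B"
    using finite_same_card_bij[of "{2..n-4}" A] finite_same_card_bij[of "{n-3..<n}" B] A B n
    by auto
  define f where
    "f i = (if i = 0 then x else if i = 1 then y else if i \<le> n - 4 then g i else h i)" for i
  have "bij_betw f {0} {x}" "bij_betw f {1} {y}" unfolding f_def by simp_all
  moreover have "bij_betw f {2..n-4} A"
    using g by (rule bij_betw_cong[THEN iffD1, rotated]) (simp add: f_def)
  moreover have "bij_betw f {n-3..<n} B"
    using h by (rule bij_betw_cong[THEN iffD1, rotated]) (use n in \<open>auto simp: f_def\<close>)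
  moreover have "x \<noteq> y" "x \<notin> A" "y \<notin> B"
    using xy A B not_in_neighbours[OF G] edgeE[OF G xy] by (auto simp: doubleton_eq_iff)
  ultimately have "bij_betw f ({0} \<union> {1} \<union> {2..n-4} \<union> {n-3..<n}) ({x} \<union> {y} \<union> A \<union> B)"
    using A B AB by (intro bij_betw_combine) auto
  moreover have "{0} \<union> {1} \<union> {2..n-4} \<union> {n-3..<n} = {0..<n}" using n by auto
  ultimately have f: "bij_betw f {0..<n} ({x, y} \<union> A \<union> B)" by (simp add: insert_commute)
  have f01: "f 0 = x" "f 1 = y" unfolding f_def by simp_all
  have "f ` e \<in> E" if "e \<in> T3_E n" for e
  proof -
    from that consider (x) i where "e = {0, i}" "1 \<le> i" "i \<le> n - 4"
      | (y) i where "e = {1, i}" "n - 3 \<le> i" "i \<le> n - 1"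
      unfolding T3_E_def by blast
    then show ?thesis
    proof cases
      case x
      then have "f i \<in> insert y A" using bij_betwE[OF g] unfolding f_def by auto
      then have "f i \<in> neighbours E x" using xy A by (auto simp: neighbours_def)
      then show ?thesis using x f01 by (simp add: neighbours_def)
    next
      case y
      then have "f i \<in> B" using bij_betwE[OF h] n unfolding f_def by auto
      then show ?thesis using y B f01 by (auto simp: neighbours_def)
    qed
  qed
  moreover have "{x, y} \<union> A \<union> B \<subseteq> V"
    using A B xy neighbours_subset[OF G] G unfolding is_graph_def by blast
  ultimately show ?thesis
    using f unfolding contains_copy_def T3_V_def bij_betw_def by blast
qed

lemma contains_T3_of_edge_counting:
  assumes G: "is_graph V E" and n: "5 \<le> n" and xy: "{x, y} \<in> E" and k: "k \<le> 3"
    and y3: "3 \<le> card (neighbours E y - {x})"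
    and y_out: "k \<le> card (neighbours E y - insert x (neighbours E x))"
    and x_many: "n - 2 \<le> card (neighbours E x - {y}) + k"
  shows "contains_copy V E (T3_V n) (T3_E n)"
proof -
  have fin: "finite (neighbours E z)" for z using finite_neighbours[OF G] .
  obtain B1 where B1: "B1 \<subseteq> neighbours E y - insert x (neighbours E x)" "card B1 = k"
    using obtain_subset_with_card_n[OF y_out] by blast
  then have "finite B1" using fin by (meson finite_Diff finite_subset)
  then have "3 - k \<le> card (neighbours E y - {x} - B1)"
    using y3 B1 diff_card_le_card_Diff[of B1 "neighbours E y - {x}"] by linarith
  then obtain B2 where B2: "B2 \<subseteq> neighbours E y - {x} - B1" "card B2 = 3 - k"
    by (meson obtain_subset_with_card_n)
  then have "finite B2" using fin by (meson finite_Diff finite_subset)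
  define B where "B = B1 \<union> B2"
  have B: "B \<subseteq> neighbours E y - {x}" "card B = 3"
    unfolding B_def using B1 B2 k card_Un_disjoint[OF \<open>finite B1\<close> \<open>finite B2\<close>] by auto
  have "B \<inter> neighbours E x \<subseteq> B2" unfolding B_def using B1 by auto
  then have "card (B \<inter> neighbours E x) \<le> 3 - k" using B2 \<open>finite B2\<close> card_mono by metis
  moreover have "card (neighbours E x - {y}) - card (B \<inter> neighbours E x)
      \<le> card (neighbours E x - {y} - (B \<inter> neighbours E x))"
    using fin by (intro diff_card_le_card_Diff) auto
  ultimately have "n - 5 \<le> card (neighbours E x - {y} - (B \<inter> neighbours E x))"
    using x_many k n by linarith
  also have "neighbours E x - {y} - (B \<inter> neighbours E x) = neighbours E x - {y} - B" by auto
  finally have "n - 5 \<le> card (neighbours E x - {y} - B)" .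
  then obtain A where A: "A \<subseteq> neighbours E x - {y} - B" "card A = n - 5"
    by (meson obtain_subset_with_card_n)
  have "A \<subseteq> neighbours E x - {y}" "A \<inter> B = {}" using A(1) by auto
  then show ?thesis using contains_T3_of_edge[OF G n xy _ A(2) B] by simp
qed

definition touching_edges :: "'a set set \<Rightarrow> 'a set \<Rightarrow> 'a set set" where
  "touching_edges E W = {e\<in>E. e \<inter> W \<noteq> {}}"

definition weighted_degree :: "'a set set \<Rightarrow> 'a set \<Rightarrow> 'a \<Rightarrow> nat" where
  "weighted_degree E W x = card (neighbours E x) + card (neighbours E x - W)"

lemma card_touching_edges_le:
  assumes G: "is_graph V E" and W: "W \<subseteq> V"
  shows "2 * card (touching_edges E W) \<le> (\<Sum>x\<in>W. weighted_degree E W x)"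
proof -
  have fW: "finite W" using W G finite_subset unfolding is_graph_def by blast
  have fin: "finite (neighbours E x)" for x using finite_neighbours[OF G] .
  define S where "S = {(x, y). {x, y} \<in> touching_edges E W}"
  define P where "P = Sigma W (neighbours E)"
  define Q where "Q = Sigma W (\<lambda>x. neighbours E x - W)"
  have card_pairs: "card {(x, y). {x, y} = e} = 2" if e: "e \<in> touching_edges E W" for e
  proof -
    obtain a b where "e = {a, b}" "a \<noteq> b"
      using e edgeE[OF G] unfolding touching_edges_def by blast
    moreover have "{(x, y). {x, y} = {a, b}} = {(a, b), (b, a)}"
      by (auto dest: doubleton_eq_iff[THEN iffD1])
    ultimately show ?thesis by simp
  qed
  have "S = (\<Union>e\<in>touching_edges E W. {(x, y). {x, y} = e})" unfolding S_def by auto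
  moreover have "finite (touching_edges E W)"
    using finite_edges[OF G] unfolding touching_edges_def by simp
  moreover have "finite {(x, y). {x, y} = e}" if "e \<in> touching_edges E W" for e
    using card_pairs[OF that] card.infinite by fastforce
  ultimately have "card S = (\<Sum>e\<in>touching_edges E W. card {(x, y). {x, y} = e})"
    by (simp add: card_UN_disjoint disjoint_iff)
  also have "\<dots> = 2 * card (touching_edges E W)" using card_pairs by simp
  finally have cS: "card S = 2 * card (touching_edges E W)" .
  have "S \<subseteq> P \<union> prod.swap ` Q"
    unfolding S_def P_def Q_def touching_edges_def neighbours_def
    by (force simp: insert_commute)
  moreover have "finite P" "finite Q" unfolding P_def Q_def using fW fin by auto
  ultimately have "card S \<le> card (P \<union> prod.swap ` Q)" by (intro card_mono) auto
  also have "\<dots> \<le> card P + card (prod.swap ` Q)" by (rule card_Un_le)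
  also have "\<dots> \<le> card P + card Q" using card_image_le[OF \<open>finite Q\<close>] by simp
  also have "\<dots> = (\<Sum>x\<in>W. weighted_degree E W x)"
    unfolding P_def Q_def weighted_degree_def using fW fin by (simp add: sum.distrib)
  finally show ?thesis using cS by simp
qed

lemma mult_pred_eq_double_choose_two: "(m::nat) * (m - 1) = 2 * (m choose 2)"
proof (cases m)
  case (Suc k)
  have "even (Suc k * k)" by simp
  then show ?thesis using Suc by (simp add: choose_two)
qed simp

locale T3_extremal =
  fixes V :: "'a set" and E :: "'a set set" and n p :: nat
  assumes extremal: "in_Ex p (T3_V n) (T3_E n) V E"
    and n: "10 \<le> n" and order: "n \<le> p"
begin

lemma graph: "is_graph V E"
  and card_V: "card V = p"
  and T3_free: "\<not> contains_copy V E (T3_V n) (T3_E n)"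
  and card_E: "card E = ex_num p (T3_V n) (T3_E n)"
  using extremal unfolding in_Ex_def by auto

lemma finite_V: "finite V"
  using graph unfolding is_graph_def by simp

lemmas finite_neighbourhood = finite_neighbours[OF graph]

(* Otherwise u and w are the vertices v_0 and v_1 of a copy of T_n^3. *)
lemma card_neighbours_le_3:
  assumes w: "w \<in> neighbours E u" and k: "k \<le> 3"
    and u_many: "n - 1 \<le> card (neighbours E u) + k"
    and w_out: "k \<le> card (neighbours E w - insert u (neighbours E u))"
  shows "card (neighbours E w) \<le> 3"
proof (rule ccontr)
  assume "\<not> ?thesis"
  moreover have "u \<in> neighbours E w" using w in_neighbours_sym by fast
  ultimately have "3 \<le> card (neighbours E w - {u})"
    using finite_neighbourhood by (simp add: card_Diff_singleton)
  moreover have "n - 2 \<le> card (neighbours E u - {w}) + k"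
    using u_many w finite_neighbourhood by (simp add: card_Diff_singleton)
  moreover have "{u, w} \<in> E" using w unfolding neighbours_def by simp
  ultimately show False
    using contains_T3_of_edge_counting[OF graph _ _ k] w_out n T3_free by simp
qed

(* Replacing the edges touching W by a clique on W keeps the graph T_n^3-free: a copy would be
   connected with more vertices than W, hence would avoid W. *)
lemma card_touching_edges_ge:
  assumes W: "W \<subseteq> V" "card W < n"
  shows "card W * (card W - 1) \<le> 2 * card (touching_edges E W)"
proof -
  have fW: "finite W" using W(1) finite_V by (rule finite_subset)
  define K where "K = {e. e \<subseteq> W \<and> card e = 2}"
  define E' where "E' = (E - touching_edges E W) \<union> K"
  have "is_graph V E'" using graph W unfolding is_graph_def E'_def K_def by auto
  moreover have "\<not> contains_copy V E' (T3_V n) (T3_E n)"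
  proof
    assume "contains_copy V E' (T3_V n) (T3_E n)"
    then obtain f where f: "inj_on f {0..<n}" "f ` {0..<n} \<subseteq> V" "\<forall>e\<in>T3_E n. f ` e \<in> E'"
      unfolding contains_copy_def T3_V_def by blast
    have crossing: "e' \<inter> W = {} \<or> e' \<subseteq> W" if "e' \<in> E'" for e'
      using that unfolding E'_def K_def touching_edges_def by auto
    have same_side: "f a \<in> W \<longleftrightarrow> f b \<in> W" if "{a, b} \<in> T3_E n" for a b
      using crossing[of "{f a, f b}"] f(3) that by auto
    have side: "f i \<in> W \<longleftrightarrow> f 0 \<in> W" if "i < n" for i
      using T3_connected[of n "\<lambda>i. f i \<in> W", OF _ same_side that] n by linarith
    show False
    proof (cases "f 0 \<in> W")
      case True
      then have "f ` {0..<n} \<subseteq> W" using side by auto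
      then have "card (f ` {0..<n}) \<le> card W" using fW by (simp add: card_mono)
      then show False using f(1) W(2) by (simp add: card_image)
    next
      case False
      have "f ` e \<in> E" if e: "e \<in> T3_E n" for e
      proof -
        have "f ` e \<inter> W = {}" using side False T3_E_subset[OF _ e] n by auto
        moreover have "e \<noteq> {}" using e unfolding T3_E_def by auto
        ultimately show ?thesis using f(3) e unfolding E'_def K_def by auto
      qed
      then show False using f(1,2) T3_free unfolding contains_copy_def T3_V_def by blast
    qed
  qed
  ultimately have "card E' \<le> card E"
    using card_edges_le_ex_num card_V card_E by metis
  moreover have "card E' = card (E - touching_edges E W) + (card W choose 2)"
  proof -
    have "(E - touching_edges E W) \<inter> K = {}"
      unfolding touching_edges_def K_def by (force simp: card_2_iff)
    moreover have "finite (E - touching_edges E W)" using finite_edges[OF graph] by simp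
    moreover have "finite K" unfolding K_def using fW by (simp add: finite_subset[of _ "Pow W"] subset_eq)
    ultimately show ?thesis unfolding E'_def using n_subsets[OF fW, of 2] K_def
      by (simp add: card_Un_disjoint)
  qed
  moreover have "card E = card (E - touching_edges E W) + card (touching_edges E W)"
    using finite_edges[OF graph] card_Diff_subset[of "touching_edges E W" E]
    unfolding touching_edges_def by (simp add: card_mono)
  moreover have "card W * (card W - 1) = 2 * (card W choose 2)"
    by (rule mult_pred_eq_double_choose_two)
  ultimately show ?thesis by linarith
qed

lemma weighted_degree_sum_ge:
  assumes "W \<subseteq> V" "card W < n"
  shows "card W * (card W - 1) \<le> (\<Sum>x\<in>W. weighted_degree E W x)"
  using card_touching_edges_ge[OF assms] card_touching_edges_le[OF graph assms(1)] by linarith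

lemma weighted_degree_le: "weighted_degree E W x \<le> 2 * card (neighbours E x)"
  unfolding weighted_degree_def
  using card_mono[OF finite_neighbourhood, of "neighbours E x - W" x] by auto

lemma V_nonempty: "V \<noteq> {}"
  using card_V order n by auto

lemma exists_vertex_outside_closed_neighbourhood:
  assumes "card (neighbours E u) \<le> n - 2"
  obtains y where "y \<in> V" "y \<notin> insert u (neighbours E u)"
proof -
  have "card (insert u (neighbours E u)) \<le> card (neighbours E u) + 1"
    using finite_neighbourhood by (simp add: card_insert_if)
  then have "card (insert u (neighbours E u)) < card V"
    using assms card_V order n by linarith
  then have "\<not> V \<subseteq> insert u (neighbours E u)"
    using card_mono[of "insert u (neighbours E u)" V] finite_neighbourhood by auto
  then show ?thesis using that by blast
qed

lemma max_degree_ge: "n - 5 \<le> max_degree V E"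
proof (rule ccontr)
  assume "\<not> ?thesis"
  then have small: "card (neighbours E z) + 1 < n - 4" for z
    using card_neighbours_le_max_degree[OF graph, of z] by linarith
  obtain u where u: "u \<in> V" using V_nonempty by blast
  have "card (neighbours E u) \<le> n - 2" using small[of u] by linarith
  then obtain x where x: "x \<in> V" "x \<notin> insert u (neighbours E u)"
    by (rule exists_vertex_outside_closed_neighbourhood)
  define E' where "E' = insert {u, x} E"
  have "{u, x} \<notin> E" "u \<noteq> x" using x unfolding neighbours_def by auto
  then have "card E' = card E + 1" unfolding E'_def using finite_edges[OF graph] by simp
  moreover have G': "is_graph V E'"
    using graph u x \<open>u \<noteq> x\<close> unfolding E'_def is_graph_def by auto
  moreover have "\<not> contains_copy V E' (T3_V n) (T3_E n)"
  proof
    assume "contains_copy V E' (T3_V n) (T3_E n)"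
    then obtain z where "n - 4 \<le> card (neighbours E' z)"
      using contains_T3_imp_card_neighbours_ge[OF G'] by blast
    then show False
      using card_neighbours_insert_edge_le[OF finite_neighbourhood, of u x z] small[of z]
      unfolding E'_def by linarith
  qed
  ultimately show False using card_edges_le_ex_num card_V card_E by fastforce
qed

lemma max_degree_less: "max_degree V E < n - 1"
proof (rule ccontr)
  assume "\<not> max_degree V E < n - 1"
  then obtain u where u: "u \<in> V" "n - 1 \<le> card (neighbours E u)"
    using max_degree_attained[OF graph V_nonempty] by (metis not_less)
  have small: "card (neighbours E w) \<le> 3" if "w \<in> neighbours E u" for w
    using card_neighbours_le_3[OF that, of 0] u(2) by simp
  obtain W where W: "W \<subseteq> neighbours E u" "card W = n - 1"
    using obtain_subset_with_card_n[OF u(2)] by blast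
  have "W \<subseteq> V" using W(1) neighbours_subset[OF graph] by blast
  then have "(n - 1) * (n - 2) \<le> (\<Sum>x\<in>W. weighted_degree E W x)"
    using weighted_degree_sum_ge[of W] W(2) n by (simp add: numeral_2_eq_2)
  also have "\<dots> \<le> (\<Sum>x\<in>W. 6)"
  proof (rule sum_mono)
    fix x assume "x \<in> W"
    then show "weighted_degree E W x \<le> 6" using weighted_degree_le[of W x] small W(1) by force
  qed
  finally have "(n - 1) * (n - 2) \<le> (n - 1) * 6" using W(2) by simp
  then show False using n by simp
qed

lemma weighted_degree_neighbour_le_n_minus_2:
  assumes D: "max_degree V E = n - 2" and u: "card (neighbours E u) = n - 2"
    and w: "w \<in> neighbours E u"
  shows "weighted_degree E (insert u (neighbours E u)) w \<le> n - 2"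
    and "\<not> neighbours E w \<subseteq> insert u (neighbours E u)
      \<Longrightarrow> weighted_degree E (insert u (neighbours E u)) w \<le> 6"
proof -
  let ?W = "insert u (neighbours E u)"
  have small: "weighted_degree E ?W w \<le> 6" if "\<not> neighbours E w \<subseteq> ?W"
  proof -
    have "1 \<le> card (neighbours E w - ?W)"
      using that finite_neighbourhood by (simp add: card_gt_0_iff Suc_le_eq)
    then have "card (neighbours E w) \<le> 3"
      using card_neighbours_le_3[OF w, of 1] u n by linarith
    then show ?thesis using weighted_degree_le[of ?W w] by simp
  qed
  then show "\<not> neighbours E w \<subseteq> ?W \<Longrightarrow> weighted_degree E ?W w \<le> 6" .
  show "weighted_degree E ?W w \<le> n - 2"
  proof (cases "neighbours E w \<subseteq> ?W")
    case True
    then have "card (neighbours E w - ?W) = 0" by (metis Diff_eq_empty_iff card.empty)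
    then show ?thesis
      using card_neighbours_le_max_degree[OF graph, of w] D by (simp add: weighted_degree_def)
  qed (use small n in simp)
qed

lemma max_degree_ne_n_minus_2:
  assumes conn: "connected_graph V E"
  shows "max_degree V E \<noteq> n - 2"
proof
  assume D: "max_degree V E = n - 2"
  obtain u where u: "u \<in> V" "card (neighbours E u) = n - 2"
    using max_degree_attained[OF graph V_nonempty] D by metis
  define W where "W = insert u (neighbours E u)"
  let ?g = "weighted_degree E W"
  have uN: "u \<notin> neighbours E u" using not_in_neighbours[OF graph] .
  have WV: "W \<subseteq> V" unfolding W_def using u neighbours_subset[OF graph] by blast
  obtain v where "v \<in> V" "v \<notin> W"
    using u(2) unfolding W_def by (metis exists_vertex_outside_closed_neighbourhood order_refl)
  then obtain c d where cd: "c \<in> W" "d \<notin> W" "{c, d} \<in> E"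
    using rtranclp_adj_leaves_set[of E u v W] conn u(1) unfolding connected_graph_def W_def by auto
  then have c: "c \<in> neighbours E u" "\<not> neighbours E c \<subseteq> W"
    unfolding W_def neighbours_def by auto
  have "card W = n - 1" unfolding W_def using uN finite_neighbourhood u n by simp
  then have "(n - 1) * (n - 2) \<le> (\<Sum>x\<in>W. ?g x)"
    using weighted_degree_sum_ge[OF WV] n by (simp add: numeral_2_eq_2)
  also have "\<dots> = ?g u + ?g c + (\<Sum>x\<in>neighbours E u - {c}. ?g x)"
    unfolding W_def using uN finite_neighbourhood c(1) by (simp add: sum.remove)
  also have "\<dots> \<le> (n - 2) + 6 + (n - 3) * (n - 2)"
  proof -
    have "?g u = n - 2" using u(2) by (auto simp: weighted_degree_def W_def)
    moreover have "?g c \<le> 6"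
      using weighted_degree_neighbour_le_n_minus_2(2)[OF D u(2) c(1)] c(2) unfolding W_def .
    moreover have "(\<Sum>x\<in>neighbours E u - {c}. ?g x) \<le> card (neighbours E u - {c}) * (n - 2)"
      using sum_bounded_above[of "neighbours E u - {c}" ?g "n - 2"]
        weighted_degree_neighbour_le_n_minus_2(1)[OF D u(2)] unfolding W_def by simp
    moreover have "card (neighbours E u - {c}) = n - 3"
      using u(2) c(1) finite_neighbourhood by simp
    ultimately show ?thesis by simp
  qed
  finally have "(n - 1) * (n - 2) \<le> (n - 2) + 6 + (n - 3) * (n - 2)" .
  moreover obtain k where "n = k + 10" using n le_Suc_ex by (metis add.commute)
  ultimately show False by (simp add: algebra_simps)
qed

lemma weighted_degree_neighbour_le_n_minus_3:
  assumes D: "max_degree V E = n - 3" and u: "card (neighbours E u) = n - 3"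
    and w: "w \<in> neighbours E u" and W: "insert u (neighbours E u) \<subseteq> W"
  shows "weighted_degree E W w \<le> n - 2"
    and "weighted_degree E W w \<le> n - 3
      \<or> card (neighbours E w) = n - 3 \<and> card (neighbours E w - insert u (neighbours E u)) = 1"
proof -
  let ?out = "card (neighbours E w - insert u (neighbours E u))"
  have deg: "card (neighbours E w) \<le> n - 3"
    using card_neighbours_le_max_degree[OF graph, of w] D by simp
  have "card (neighbours E w - W) \<le> ?out"
    using W finite_neighbourhood by (intro card_mono) auto
  moreover have "card (neighbours E w) \<le> 3" if "2 \<le> ?out"
    using card_neighbours_le_3[OF w _ _ that] u n by linarith
  ultimately have "weighted_degree E W w \<le> n - 3
      \<or> card (neighbours E w) = n - 3 \<and> ?out = 1 \<and> weighted_degree E W w \<le> n - 2"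
    using deg n weighted_degree_le[of W w] unfolding weighted_degree_def by linarith
  then show "weighted_degree E W w \<le> n - 2"
    and "weighted_degree E W w \<le> n - 3 \<or> card (neighbours E w) = n - 3 \<and> ?out = 1"
    by auto
qed

lemma weighted_degree_sum_ge_n_minus_3:
  assumes u: "u \<in> V" "card (neighbours E u) = n - 3"
    and y: "y \<in> V" "y \<notin> insert u (neighbours E u)"
  defines "W \<equiv> insert y (insert u (neighbours E u))"
  shows "(n - 1) * (n - 2)
    \<le> weighted_degree E W y + (n - 3) + (\<Sum>x\<in>neighbours E u. weighted_degree E W x)"
proof -
  have uN: "u \<notin> neighbours E u" using not_in_neighbours[OF graph] .
  have "W \<subseteq> V" unfolding W_def using u y neighbours_subset[OF graph] by blast
  moreover have "card W = n - 1" unfolding W_def using u(2) y(2) uN finite_neighbourhood n by simp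
  ultimately have "(n - 1) * (n - 2) \<le> (\<Sum>x\<in>W. weighted_degree E W x)"
    using weighted_degree_sum_ge[of W] n by (simp add: numeral_2_eq_2)
  also have "\<dots> = weighted_degree E W y + weighted_degree E W u
      + (\<Sum>x\<in>neighbours E u. weighted_degree E W x)"
    using y(2) uN finite_neighbourhood unfolding W_def by simp
  also have "weighted_degree E W u = n - 3" using u(2) by (auto simp: weighted_degree_def W_def)
  finally show ?thesis .
qed

lemma max_degree_ne_n_minus_3: "max_degree V E \<noteq> n - 3"
proof
  assume D: "max_degree V E = n - 3"
  obtain u where u: "u \<in> V" "card (neighbours E u) = n - 3"
    using max_degree_attained[OF graph V_nonempty] D by metis
  define U where "U = insert u (neighbours E u)"
  obtain k where k: "n = k + 10" using n le_Suc_ex by (metis add.commute)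
  show False
  proof (cases "\<exists>w\<in>neighbours E u. card (neighbours E w) = n - 3
      \<and> card (neighbours E w - U) = 1")
    case True
    then obtain w y where w: "w \<in> neighbours E u" "card (neighbours E w) = n - 3"
      and wy: "neighbours E w - U = {y}" by (auto simp: card_1_singleton_iff)
    \<comment> \<open>Completing U by this y bounds its weighted degree by n - 2, as N[w] \<subseteq> U \<union> {y}.\<close>
    then have y: "y \<in> neighbours E w" "y \<notin> U" "y \<in> V"
      using neighbours_subset[OF graph] by auto
    have "insert w (neighbours E w) \<subseteq> insert y U" using wy w(1) unfolding U_def by auto
    then have "weighted_degree E (insert y U) y \<le> n - 2"
      using weighted_degree_neighbour_le_n_minus_3(1)[OF D w(2) y(1)] by blast
    moreover have "(\<Sum>x\<in>neighbours E u. weighted_degree E (insert y U) x)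
        \<le> (\<Sum>x\<in>neighbours E u. n - 2)"
      by (rule sum_mono, rule weighted_degree_neighbour_le_n_minus_3(1)[OF D u(2)]) (auto simp: U_def)
    ultimately show False
      using weighted_degree_sum_ge_n_minus_3[OF u y(3) y(2)[unfolded U_def]] u(2) k
      unfolding U_def by (simp add: algebra_simps)
  next
    case False
    have "card (neighbours E u) \<le> n - 2" using u(2) by simp
    then obtain y where y: "y \<in> V" "y \<notin> U"
      unfolding U_def by (rule exists_vertex_outside_closed_neighbourhood)
    have "weighted_degree E (insert y U) y \<le> 2 * (n - 3)"
      using weighted_degree_le[of "insert y U" y] card_neighbours_le_max_degree[OF graph, of y] D
      by linarith
    moreover have "(\<Sum>x\<in>neighbours E u. weighted_degree E (insert y U) x)
        \<le> (\<Sum>x\<in>neighbours E u. n - 3)"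
    proof (rule sum_mono)
      fix x assume "x \<in> neighbours E u"
      then show "weighted_degree E (insert y U) x \<le> n - 3"
        using weighted_degree_neighbour_le_n_minus_3(2)[OF D u(2), of x "insert y U"] False
        unfolding U_def by auto
    qed
    ultimately show False
      using weighted_degree_sum_ge_n_minus_3[OF u y(1) y(2)[unfolded U_def]] u(2) k
      unfolding U_def by (simp add: algebra_simps)
  qed
qed
end

theorem lemma4p1:
  fixes p n :: nat and V :: "'a set" and E :: "'a set set"
  assumes "n \<ge> 10" and "p \<ge> n"
    and "in_Ex p (T3_V n) (T3_E n) V E"
    and "connected_graph V E"
  shows "max_degree V E \<in> {n - 5, n - 4}"
proof -
  interpret T3_extremal V E n p
    by unfold_locales (use assms in auto)
  show ?thesis
    using max_degree_ge max_degree_less max_degree_ne_n_minus_2[OF assms(4)] max_degree_ne_n_minus_3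
    by auto
qed

end
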